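(* Let $(X,\rho)$ be a metric space, $f:X\to X$ continuous, $x\in X$, $\ell\in\mathbb N$, $n\ge2$ an integer and $\varepsilon>0$. Define $\Delta_\ell$ by \[ C_\ell(x,n,\varepsilon)=\frac1{n^2}\Big[\sum_{l\ge\ell}(l-\ell+1)N_l(x,n,\varepsilon)+n+\Delta_\ell\Big]. \] Then $0\le\Delta_\ell\le2(\ell-1)(n-1)$.
   Context: Bowen metric: $\rho_\ell(y,z)=\max_{0\le i<\ell}\rho(f^iy,f^iz)$. Correlation sum: $C_\ell(x,n,\varepsilon)=n^{-2}\#\{(i,j):0\le i,j<n,\ \rho_\ell(f^ix,f^jx)\le\varepsilon\}$. Recurrence plot $R(x,n,\varepsilon)$: the $n\times n$ matrix indexed by $0\le i,j<n$ with entry $1$ if $\rho(f^ix,f^jx)\le\varepsilon$ and $0$ otherwise. A line of length $\ell$ in it is a triple $(i,j,\ell)$ of integers with $0\le i,j\le n-\ell$, $i\ne j$, entries $(i+k,j+k)$ equal to $1$ for all $0\le k<\ell$, entry $(i-1,j-1)$ equal to $0$ if $\min\{i,j\}>0$, and entry $(i+\ell,j+\ell)$ equal to $0$ if $\max\{i,j\}<n-\ell$. $N_l(x,n,\varepsilon)$ is the number of lines of length exactly $l$ (including lines with $\min\{i,j\}=0$ or $\max\{i,j\}=n-l$). *)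

theory Defs
  imports "HOL-Analysis.Analysis"
begin

text \<open>Bowen metric rho_l(y,z) = max over 0 <= i < l of dist (f^i y) (f^i z) (meant for l >= 1).\<close>
definition bowen_dist :: "('a::metric_space \<Rightarrow> 'a) \<Rightarrow> nat \<Rightarrow> 'a \<Rightarrow> 'a \<Rightarrow> real" where
  "bowen_dist f l y z = Max ((\<lambda>i. dist ((f ^^ i) y) ((f ^^ i) z)) ` {..<l})"

definition corr_sum :: "('a::metric_space \<Rightarrow> 'a) \<Rightarrow> nat \<Rightarrow> 'a \<Rightarrow> nat \<Rightarrow> real \<Rightarrow> real" where
  "corr_sum f l x n eps =
     real (card {(i, j). i < n \<and> j < n \<and> bowen_dist f l ((f ^^ i) x) ((f ^^ j) x) \<le> eps})
     / (real n)^2"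

definition rp_entry :: "('a::metric_space \<Rightarrow> 'a) \<Rightarrow> 'a \<Rightarrow> real \<Rightarrow> nat \<Rightarrow> nat \<Rightarrow> bool" where
  "rp_entry f x eps i j \<longleftrightarrow> dist ((f ^^ i) x) ((f ^^ j) x) \<le> eps"

definition is_line :: "('a::metric_space \<Rightarrow> 'a) \<Rightarrow> 'a \<Rightarrow> nat \<Rightarrow> real \<Rightarrow> nat \<Rightarrow> nat \<Rightarrow> nat \<Rightarrow> bool" where
  "is_line f x n eps i j l \<longleftrightarrow>
     i + l \<le> n \<and> j + l \<le> n \<and> i \<noteq> j \<and>
     (\<forall>k<l. rp_entry f x eps (i + k) (j + k)) \<and>
     (min i j > 0 \<longrightarrow> \<not> rp_entry f x eps (i - 1) (j - 1)) \<and>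
     (max i j < n - l \<longrightarrow> \<not> rp_entry f x eps (i + l) (j + l))"

definition num_lines :: "('a::metric_space \<Rightarrow> 'a) \<Rightarrow> 'a \<Rightarrow> nat \<Rightarrow> real \<Rightarrow> nat \<Rightarrow> nat" where
  "num_lines f x n eps l = card {(i, j). is_line f x n eps i j l}"

end

theory Submission
  imports Defs
begin

text \<open>A pair \<open>(i, j)\<close> counted by \<open>n\<^sup>2 C\<^sub>\<ell>\<close> is one where the recurrence plot has \<open>\<ell>\<close> ones
  along the diagonal starting at \<open>(i, j)\<close>. There are \<open>n\<close> such pairs on the main diagonal. An
  off-diagonal run that fits into the plot lies in a unique maximal line, and a line of length
  \<open>l \<ge> \<ell>\<close> contains exactly \<open>l - \<ell> + 1\<close> such runs; so these pairs number
  \<open>\<Sum>(l - \<ell> + 1) N\<^sub>l\<close>. Hence \<open>\<Delta>\<^sub>\<ell>\<close> counts the off-diagonal runs that stick out of the plot;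
  for each of them \<open>i\<close> or \<open>j\<close> is one of the last \<open>\<ell> - 1\<close> indices, giving the bound
  \<open>2(\<ell> - 1)(n - 1)\<close>.\<close>

definition diag_run :: "('a::metric_space \<Rightarrow> 'a) \<Rightarrow> 'a \<Rightarrow> real \<Rightarrow> nat \<Rightarrow> nat \<Rightarrow> nat \<Rightarrow> bool" where
  "diag_run f x eps i j l \<longleftrightarrow> (\<forall>k<l. rp_entry f x eps (i + k) (j + k))"

lemma diag_run_Suc_left:
  "rp_entry f x eps i j \<Longrightarrow> diag_run f x eps (Suc i) (Suc j) l \<Longrightarrow> diag_run f x eps i j (Suc l)"
  unfolding diag_run_def by (auto simp: less_Suc_eq_0_disj)

lemma diag_run_Suc_right:
  "diag_run f x eps i j l \<Longrightarrow> rp_entry f x eps (i + l) (j + l) \<Longrightarrow> diag_run f x eps i j (Suc l)"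
  unfolding diag_run_def using less_Suc_eq by auto

lemma diag_run_shift:
  "diag_run f x eps i j l \<Longrightarrow> t + m \<le> l \<Longrightarrow> diag_run f x eps (i + t) (j + t) m"
  unfolding diag_run_def by (simp add: add.assoc)

lemma is_line_iff_diag_run:
  "is_line f x n eps i j l \<longleftrightarrow>
     i + l \<le> n \<and> j + l \<le> n \<and> i \<noteq> j \<and> diag_run f x eps i j l \<and>
     (min i j > 0 \<longrightarrow> \<not> rp_entry f x eps (i - 1) (j - 1)) \<and>
     (max i j < n - l \<longrightarrow> \<not> rp_entry f x eps (i + l) (j + l))"
  unfolding is_line_def diag_run_def ..

lemma bowen_dist_orbit_le_iff:
  assumes "L \<ge> 1"
  shows "bowen_dist f L ((f ^^ i) x) ((f ^^ j) x) \<le> eps \<longleftrightarrow> diag_run f x eps i j L"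
proof -
  have "(f ^^ k) ((f ^^ i) x) = (f ^^ (i + k)) x" for i k
    by (metis add.commute comp_apply funpow_add)
  moreover have "{..<L} \<noteq> {}"
    using assms by (simp add: lessThan_empty_iff)
  ultimately show ?thesis
    unfolding bowen_dist_def diag_run_def rp_entry_def by (auto simp: Max_le_iff)
qed

text \<open>The entry just before the start of the second line would be a \<open>1\<close> of the first.\<close>
lemma is_line_no_start_inside:
  assumes line1: "is_line f x n eps i j l" and line2: "is_line f x n eps i' j' l'"
    and diag: "i + j' = i' + j" and "i < i'" "i' < i + l"
  shows False
proof -
  have "diag_run f x eps i j l"
    using line1 by (simp add: is_line_iff_diag_run)
  then have "diag_run f x eps (i + (i' - 1 - i)) (j + (i' - 1 - i)) 1"
    by (rule diag_run_shift) (use assms(4,5) in linarith)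
  moreover have "i + (i' - 1 - i) = i' - 1" "j + (i' - 1 - i) = j' - 1" "min i' j' > 0"
    using diag \<open>i < i'\<close> by auto
  ultimately show False
    using line2 by (simp add: is_line_iff_diag_run diag_run_def)
qed

lemma is_line_length_unique:
  assumes "is_line f x n eps i j l" "is_line f x n eps i j l'"
  shows "l = l'"
proof -
  have "\<not> l < l'" if "is_line f x n eps i j l" "is_line f x n eps i j l'" for l l'
  proof
    assume "l < l'"
    with that(2) have "rp_entry f x eps (i + l) (j + l)" "max i j < n - l"
      by (auto simp: is_line_def)
    with that(1) show False
      by (simp add: is_line_def)
  qed
  from this[OF assms] this[OF assms(2,1)] show ?thesis
    by linarith
qed

lemma is_line_overlap_unique:
  assumes line1: "is_line f x n eps i j l" and line2: "is_line f x n eps i' j' l'"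
    and diag: "i + j' = i' + j"
    and "i \<le> a" "a < i + l" "i' \<le> a" "a < i' + l'"
  shows "i = i' \<and> j = j' \<and> l = l'"
proof -
  have "i' < i + l" "i < i' + l'"
    using assms(4-7) by linarith+
  then have "i = i'"
    using is_line_no_start_inside[OF line1 line2 diag] is_line_no_start_inside[OF line2 line1 diag[symmetric]]
    by (cases i i' rule: linorder_cases) auto
  with diag have "j = j'" by simp
  with \<open>i = i'\<close> show ?thesis
    using is_line_length_unique line1 line2 by blast
qed

text \<open>Among the runs containing the given one take a longest; maximality forces both end
  conditions of a line.\<close>
lemma diag_run_in_line:
  assumes "i0 \<noteq> j0" "i0 + m \<le> n" "j0 + m \<le> n" "diag_run f x eps i0 j0 m"
  obtains i j l where "is_line f x n eps i j l" "i \<le> i0" "j \<le> j0" "i0 - i = j0 - j" "i0 + m \<le> i + l"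
proof -
  define covers where "covers = (\<lambda>(i, j, l). i \<le> i0 \<and> j \<le> j0 \<and> i0 - i = j0 - j
    \<and> i0 + m \<le> i + l \<and> i + l \<le> n \<and> j + l \<le> n \<and> diag_run f x eps i j l)"
  have "covers (i0, j0, m)"
    using assms by (simp add: covers_def)
  moreover have "\<forall>r. covers r \<longrightarrow> snd (snd r) < Suc n"
    by (auto simp: covers_def)
  ultimately obtain r where "covers r" and longest: "\<And>r'. covers r' \<Longrightarrow> snd (snd r') \<le> snd (snd r)"
    using Lattices_Big.ex_has_greatest_nat[of covers _ "\<lambda>r. snd (snd r)"] by blast
  then obtain i j l where run: "covers (i, j, l)" and r: "r = (i, j, l)"
    by (cases r) auto
  have "\<not> rp_entry f x eps (i - 1) (j - 1)" if "min i j > 0"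
  proof
    assume "rp_entry f x eps (i - 1) (j - 1)"
    with that run have "covers (i - 1, j - 1, Suc l)"
      unfolding covers_def by (auto intro: diag_run_Suc_left)
    with longest r show False by fastforce
  qed
  moreover have "\<not> rp_entry f x eps (i + l) (j + l)" if "max i j < n - l"
  proof
    assume "rp_entry f x eps (i + l) (j + l)"
    with that run have "covers (i, j, Suc l)"
      unfolding covers_def by (auto intro: diag_run_Suc_right)
    with longest r show False by fastforce
  qed
  moreover have "i \<noteq> j"
    using run assms(1) by (auto simp: covers_def)
  ultimately have "is_line f x n eps i j l"
    using run by (simp add: covers_def is_line_iff_diag_run)
  with run show thesis
    by (intro that) (auto simp: covers_def)
qed

definition line_windows :: "nat \<Rightarrow> nat \<Rightarrow> nat \<Rightarrow> nat \<Rightarrow> (nat \<times> nat) set" where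
  "line_windows L i j l = (\<lambda>t. (i + t, j + t)) ` {..l - L}"

definition window_pairs :: "('a::metric_space \<Rightarrow> 'a) \<Rightarrow> 'a \<Rightarrow> nat \<Rightarrow> real \<Rightarrow> nat \<Rightarrow> (nat \<times> nat) set" where
  "window_pairs f x n eps L = {(p, q). p \<noteq> q \<and> p + L \<le> n \<and> q + L \<le> n \<and> diag_run f x eps p q L}"

lemma card_line_windows: "card (line_windows L i j l) = l - L + 1"
proof -
  have "inj_on (\<lambda>t. (i + t, j + t)) {..l - L}"
    by (auto simp: inj_on_def)
  then show ?thesis
    by (simp add: line_windows_def card_image)
qed

lemma line_windows_overlap_unique:
  assumes "L \<ge> 1" "L \<le> l" "L \<le> l'"
    and "is_line f x n eps i j l" "is_line f x n eps i' j' l'"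
    and "line_windows L i j l \<inter> line_windows L i' j' l' \<noteq> {}"
  shows "(l, i, j) = (l', i', j')"
proof -
  obtain t t' where t: "t \<le> l - L" "t' \<le> l' - L" "i + t = i' + t'" "j + t = j' + t'"
    using assms(6) by (auto simp: line_windows_def)
  have "i + j' = i' + j" "i + t < i + l" "i + t < i' + l'"
    using t assms(1-3) by linarith+
  with t(3) show ?thesis
    using is_line_overlap_unique[OF assms(4,5), of "i + t"] by simp
qed

lemma window_pairs_eq_UN_line_windows:
  assumes "L \<ge> 1"
  shows "window_pairs f x n eps L =
    (\<Union>(l, i, j) \<in> (SIGMA l:{L..n}. {(i, j). is_line f x n eps i j l}). line_windows L i j l)"
  (is "_ = ?U")
proof
  show "window_pairs f x n eps L \<subseteq> ?U"
  proof
    fix c assume "c \<in> window_pairs f x n eps L"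
    then obtain p q where c: "c = (p, q)" "p \<noteq> q" "p + L \<le> n" "q + L \<le> n" "diag_run f x eps p q L"
      by (auto simp: window_pairs_def)
    obtain i j l where line: "is_line f x n eps i j l" "i \<le> p" "j \<le> q" "p - i = q - j" "p + L \<le> i + l"
      by (rule diag_run_in_line[OF c(2-5)])
    have "L \<le> l" "l \<le> n"
      using c(3) line(1,2,5) by (auto simp: is_line_def)
    have "c = (i + (p - i), j + (p - i))" "p - i \<le> l - L"
      using c(1) line(2-5) by auto
    then have "c \<in> line_windows L i j l"
      unfolding line_windows_def by blast
    with line(1) \<open>L \<le> l\<close> \<open>l \<le> n\<close> show "c \<in> ?U"
      by (intro UN_I[of "(l, i, j)"]) simp_all
  qed
  show "?U \<subseteq> window_pairs f x n eps L"
  proof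
    fix c assume "c \<in> ?U"
    then obtain l i j t where "L \<le> l" and line: "is_line f x n eps i j l"
      and "t \<le> l - L" and c: "c = (i + t, j + t)"
      by (auto simp: line_windows_def)
    then have "t + L \<le> l" "i \<noteq> j" "i + l \<le> n" "j + l \<le> n" "diag_run f x eps i j l"
      by (auto simp: is_line_iff_diag_run)
    then show "c \<in> window_pairs f x n eps L"
      unfolding c window_pairs_def by (auto intro: diag_run_shift)
  qed
qed

lemma card_window_pairs:
  assumes "L \<ge> 1"
  shows "card (window_pairs f x n eps L) = (\<Sum>l\<in>{L..n}. (l - L + 1) * num_lines f x n eps l)"
proof -
  define lines where "lines l = {(i, j). is_line f x n eps i j l}" for l
  have fin_lines: "finite (lines l)" for l
    by (rule finite_subset[of _ "{..n} \<times> {..n}"]) (auto simp: lines_def is_line_def)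
  define windows where "windows = (\<lambda>(l, i, j). line_windows L i j l)"
  have "window_pairs f x n eps L = \<Union>(windows ` (SIGMA l:{L..n}. lines l))"
    unfolding window_pairs_eq_UN_line_windows[OF assms] windows_def lines_def ..
  also have "card \<dots> = (\<Sum>r \<in> (SIGMA l:{L..n}. lines l). card (windows r))"
  proof (rule card_UN_disjoint)
    show "finite (SIGMA l:{L..n}. lines l)"
      using fin_lines by auto
    show "\<forall>r\<in>SIGMA l:{L..n}. lines l. \<forall>r'\<in>SIGMA l:{L..n}. lines l.
        r \<noteq> r' \<longrightarrow> windows r \<inter> windows r' = {}"
      using line_windows_overlap_unique[OF assms] by (fastforce simp: lines_def windows_def)
  qed (auto simp: windows_def line_windows_def)
  also have "\<dots> = (\<Sum>(l, p) \<in> (SIGMA l:{L..n}. lines l). l - L + 1)"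
    by (rule sum.cong) (auto simp: windows_def card_line_windows)
  also have "\<dots> = (\<Sum>l\<in>{L..n}. \<Sum>p \<in> lines l. l - L + 1)"
    by (rule sum.Sigma[symmetric]) (auto simp: fin_lines)
  also have "\<dots> = (\<Sum>l\<in>{L..n}. (l - L + 1) * num_lines f x n eps l)"
    by (simp add: num_lines_def lines_def mult.commute)
  finally show ?thesis .
qed

definition overhanging_pairs :: "('a::metric_space \<Rightarrow> 'a) \<Rightarrow> 'a \<Rightarrow> nat \<Rightarrow> real \<Rightarrow> nat \<Rightarrow> (nat \<times> nat) set" where
  "overhanging_pairs f x n eps L =
     {(p, q). p < n \<and> q < n \<and> p \<noteq> q \<and> (n < p + L \<or> n < q + L) \<and> diag_run f x eps p q L}"

lemma card_offdiag_near_end_le: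
  "card {(p, q). p < n \<and> q < n \<and> p \<noteq> q \<and> (n < p + L \<or> n < q + L)} \<le> 2 * ((L - 1) * (n - 1))"
  (is "card ?S \<le> _")
proof -
  define I where "I = {p. p < n \<and> n < p + L}"
  define A where "A = (SIGMA p:I. {..<n} - {p})"
  have "I \<subseteq> {n + 1 - L..<n}"
    by (auto simp: I_def)
  then have "card I \<le> L - 1"
    using card_mono[of "{n + 1 - L..<n}" I] by simp
  have "finite I"
    by (simp add: I_def)
  then have "card A = card I * (n - 1)"
    by (simp add: A_def card_SigmaI I_def)
  also have "\<dots> \<le> (L - 1) * (n - 1)"
    using \<open>card I \<le> L - 1\<close> by simp
  finally have card_A: "card A \<le> (L - 1) * (n - 1)" .
  have "?S \<subseteq> A \<union> prod.swap ` A"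
    by (auto simp: A_def I_def image_iff)
  moreover have "finite A"
    using \<open>finite I\<close> by (simp add: A_def)
  ultimately have "card ?S \<le> card (A \<union> prod.swap ` A)"
    by (intro card_mono) auto
  also have "\<dots> \<le> card A + card (prod.swap ` A)"
    by (rule card_Un_le)
  also have "\<dots> \<le> 2 * card A"
    using card_image_le[OF \<open>finite A\<close>, of prod.swap] by simp
  finally show ?thesis
    using card_A by linarith
qed

lemma card_overhanging_pairs_le:
  "card (overhanging_pairs f x n eps L) \<le> 2 * ((L - 1) * (n - 1))"
proof -
  have "finite {(p, q). p < n \<and> q < n \<and> p \<noteq> q \<and> (n < p + L \<or> n < q + L)}"
    by (rule finite_subset[of _ "{..<n} \<times> {..<n}"]) auto
  then have "card (overhanging_pairs f x n eps L)
      \<le> card {(p, q). p < n \<and> q < n \<and> p \<noteq> q \<and> (n < p + L \<or> n < q + L)}"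
    by (rule card_mono) (auto simp: overhanging_pairs_def)
  then show ?thesis
    using card_offdiag_near_end_le by (rule order_trans)
qed

lemma card_bowen_pairs:
  assumes "L \<ge> 1" "eps \<ge> 0"
  shows "card {(i, j). i < n \<and> j < n \<and> bowen_dist f L ((f ^^ i) x) ((f ^^ j) x) \<le> eps}
    = n + card (window_pairs f x n eps L) + card (overhanging_pairs f x n eps L)"
proof -
  have fin: "finite (window_pairs f x n eps L)" "finite (overhanging_pairs f x n eps L)"
    by (rule finite_subset[of _ "{..n} \<times> {..n}"]; auto simp: window_pairs_def overhanging_pairs_def)+
  have "diag_run f x eps i i L" for i
    using assms(2) by (simp add: diag_run_def rp_entry_def)
  then have "{(i, j). i < n \<and> j < n \<and> bowen_dist f L ((f ^^ i) x) ((f ^^ j) x) \<le> eps}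
    = (\<lambda>i. (i, i)) ` {..<n} \<union> window_pairs f x n eps L \<union> overhanging_pairs f x n eps L"
    using assms(1) by (auto simp: bowen_dist_orbit_le_iff window_pairs_def overhanging_pairs_def)
  also have "card \<dots> = card ((\<lambda>i. (i, i)) ` {..<n}) + card (window_pairs f x n eps L)
      + card (overhanging_pairs f x n eps L)"
    using fin by (subst card_Un_disjoint card_Un_disjoint;
        auto simp: window_pairs_def overhanging_pairs_def)+
  also have "card ((\<lambda>i. (i, i)) ` {..<n}) = n"
    by (simp add: card_image inj_on_def)
  finally show ?thesis .
qed

theorem mainTheorem6:
  fixes f :: "'a::metric_space \<Rightarrow> 'a" and x :: 'a and L n :: nat and eps :: real
  assumes "continuous_on UNIV f"
    and "L \<ge> 1"
    and "n \<ge> 2"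
    and "eps > 0"
  shows "let D = (real n)^2 * corr_sum f L x n eps
                 - (\<Sum>l\<in>{L..n}. real (l - L + 1) * real (num_lines f x n eps l))
                 - real n
         in 0 \<le> D \<and> D \<le> 2 * (real L - 1) * (real n - 1)"
proof -
  have "(real n)^2 * corr_sum f L x n eps
      = real n + real (card (window_pairs f x n eps L)) + real (card (overhanging_pairs f x n eps L))"
    using assms(3) card_bowen_pairs[OF assms(2), of eps n f x] assms(4)
    by (simp add: corr_sum_def)
  moreover have "(\<Sum>l\<in>{L..n}. real (l - L + 1) * real (num_lines f x n eps l))
      = real (card (window_pairs f x n eps L))"
    by (simp only: card_window_pairs[OF assms(2)] of_nat_sum of_nat_mult)
  moreover have "real (card (overhanging_pairs f x n eps L)) \<le> real (2 * ((L - 1) * (n - 1)))"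
    by (simp only: of_nat_le_iff card_overhanging_pairs_le)
  moreover have "real (2 * ((L - 1) * (n - 1))) = 2 * (real L - 1) * (real n - 1)"
    using assms(2,3) by (simp add: of_nat_diff)
  ultimately show ?thesis
    unfolding Let_def by linarith
qed

end
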